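(* Let $a<b$ and $f\in C([a,b])$. Then for every $\varepsilon>0$ there exists a function $\phi$ generated by a $\sigma$-activated network with width $36$ and depth $5$ such that $|\phi(x)-f(x)|<\varepsilon$ for all $x\in[a,b]$.
   Context: Let $\sigma_1:\mathbb{R}\to\mathbb{R}$ be the continuous triangular-wave function of period $2$: $\sigma_1(x)=|x|$ for $x\in[-1,1]$, $\sigma_1(x+2)=\sigma_1(x)$. Let $\sigma_2(x)=x/(|x|+1)$. The activation function is $\sigma(x)=\sigma_1(x)$ for $x\ge0$ and $\sigma(x)=\sigma_2(x)$ for $x<0$, applied entrywise. A function generated by a $\sigma$-activated network with input dimension $n$, width $N$ and depth $L$ is a function of the form $\mathcal{L}_{\ell}\circ\sigma\circ\mathcal{L}_{\ell-1}\circ\cdots\circ\sigma\circ\mathcal{L}_0$ with $\ell\le L$ hidden layers, where $\mathcal{L}_0:\mathbb{R}^n\to\mathbb{R}^{N_1}$, $\mathcal{L}_i:\mathbb{R}^{N_i}\to\mathbb{R}^{N_{i+1}}$, $\mathcal{L}_\ell:\mathbb{R}^{N_\ell}\to\mathbb{R}$ are affine maps and each $N_i\le N$. *)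

theory Defs
  imports "HOL-Analysis.Analysis"
begin

text \<open>Triangular wave of period 2: sigma1 x = |x| on [-1,1], sigma1 (x+2) = sigma1 x.
  Explicitly, sigma1 x = |x - 2 * round(x/2)| where the shift 2k brings x into [-1,1].\<close>
definition sigma1 :: "real \<Rightarrow> real" where
  "sigma1 x = \<bar>x - 2 * of_int \<lfloor>(x + 1) / 2\<rfloor>\<bar>"

definition sigma2 :: "real \<Rightarrow> real" where
  "sigma2 x = x / (\<bar>x\<bar> + 1)"

definition act :: "real \<Rightarrow> real" where
  "act x = (if x \<ge> 0 then sigma1 x else sigma2 x)"

text \<open>Vectors in R^m are represented as functions nat => real, with only the
  indices < m being relevant. An affine map R^m -> R^k is a pair (W, c) with
  W i j the weight from input j to output i and c the bias.\<close>
definition affine_apply :: "nat \<Rightarrow> (nat \<Rightarrow> nat \<Rightarrow> real) \<Rightarrow> (nat \<Rightarrow> real) \<Rightarrow> (nat \<Rightarrow> real) \<Rightarrow> (nat \<Rightarrow> real)" where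
  "affine_apply m W c v = (\<lambda>i. (\<Sum>j<m. W i j * v j) + c i)"

text \<open>A hidden layer is (N, W, c): output width N, affine map W,c, then entrywise act.
  hidden_eval m Ls v feeds a vector of dimension m through the hidden layers and
  returns the resulting vector together with its dimension.\<close>
fun hidden_eval :: "nat \<Rightarrow> (nat \<times> (nat \<Rightarrow> nat \<Rightarrow> real) \<times> (nat \<Rightarrow> real)) list \<Rightarrow> (nat \<Rightarrow> real) \<Rightarrow> nat \<times> (nat \<Rightarrow> real)" where
  "hidden_eval m [] v = (m, v)"
| "hidden_eval m ((N, W, c) # Ls) v = hidden_eval N Ls (\<lambda>i. act (affine_apply m W c v i))"

definition net_eval :: "nat \<Rightarrow> (nat \<times> (nat \<Rightarrow> nat \<Rightarrow> real) \<times> (nat \<Rightarrow> real)) list \<Rightarrow> (nat \<Rightarrow> real) \<Rightarrow> real \<Rightarrow> (nat \<Rightarrow> real) \<Rightarrow> real" where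
  "net_eval n Ls w b v = (let (m, u) = hidden_eval n Ls v in (\<Sum>j<m. w j * u j) + b)"

definition generated_by_net :: "nat \<Rightarrow> nat \<Rightarrow> nat \<Rightarrow> ((nat \<Rightarrow> real) \<Rightarrow> real) \<Rightarrow> bool" where
  "generated_by_net n N L phi \<longleftrightarrow>
     (\<exists>Ls w b. length Ls \<le> L \<and> (\<forall>l\<in>set Ls. 1 \<le> fst l \<and> fst l \<le> N) \<and>
        (\<forall>v. phi v = net_eval n Ls w b (\<lambda>j. if j < n then v j else 0)))"

end

theory Submission
  imports Defs "HOL-Computational_Algebra.Polynomial"
begin

(* Rescale f to a function g with values in [0,1] and [a,b] to [0,U], U = 2N, with N so large
   that g varies by little over distance 3/2 in the new variable u. The map y - sigma1 y, applied
   twice, is constant 2m on [2m, 2m + 3/2]; feeding it through sigma2 and sigma1 gives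
   sigma1 (s / (m + c)) there. For c such that the numbers 1 / (m + c) are rationally independent,
   Kronecker's theorem yields one s for which these values approximate g near u = 2m for all
   m \<le> N simultaneously. A second copy applied to u + 1 covers the gaps between the plateaus, and
   the phase sigma1 (u + 5/4) subtracts a large penalty from whichever copy is off its plateau, so
   the maximum of the two copies, computed with an absolute value in the last layer,
   approximates g everywhere. *)

section \<open>The activation function\<close>

lemma sigma1_eq_abs:
  fixes j :: int
  assumes "\<bar>y - 2 * of_int j\<bar> \<le> 1"
  shows "sigma1 y = \<bar>y - 2 * of_int j\<bar>"
proof (cases "y - 2 * of_int j < 1")
  case True
  then have "\<lfloor>(y + 1) / 2\<rfloor> = j"
    using assms by (intro floor_unique) (auto simp: field_simps abs_le_iff)
  then show ?thesis by (simp add: sigma1_def)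
next
  case False
  then have y: "y = 2 * of_int j + 1" using assms by (auto simp: abs_le_iff)
  have "\<lfloor>(y + 1) / 2\<rfloor> = j + 1" unfolding y by (intro floor_unique) (auto simp: field_simps)
  then show ?thesis using y by (simp add: sigma1_def)
qed

lemma sigma1_def_abs_le_one: "\<bar>(y::real) - 2 * of_int \<lfloor>(y + 1) / 2\<rfloor>\<bar> \<le> 1"
proof -
  have "of_int \<lfloor>(y + 1) / 2\<rfloor> \<le> (y + 1) / 2" "(y + 1) / 2 < of_int \<lfloor>(y + 1) / 2\<rfloor> + 1"
    by linarith+
  then show ?thesis by (auto simp: abs_le_iff field_simps)
qed

lemma sigma1_nonneg: "0 \<le> sigma1 y"
  and sigma1_le_one: "sigma1 y \<le> 1"
  using sigma1_def_abs_le_one[of y] by (auto simp: sigma1_def)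

lemma sigma1_le_abs: "sigma1 y \<le> \<bar>y - 2 * of_int j\<bar>"
  using sigma1_eq_abs[of y j] sigma1_le_one[of y] by fastforce

lemma sigma1_lipschitz: "\<bar>sigma1 y - sigma1 z\<bar> \<le> \<bar>y - z\<bar>"
proof -
  have "sigma1 y \<le> sigma1 z + \<bar>y - z\<bar>" for y z
    using sigma1_le_abs[of y "\<lfloor>(z + 1) / 2\<rfloor>"] by (simp add: sigma1_def)
  from this[of y z] this[of z y] show ?thesis by (simp add: abs_le_iff abs_minus_commute)
qed

lemma sigma1_minus: "sigma1 (- y) = sigma1 y"
  using sigma1_eq_abs[of "- y" "- \<lfloor>(y + 1) / 2\<rfloor>"] sigma1_def_abs_le_one[of y]
  by (simp add: sigma1_def abs_minus_commute)

lemma sigma1_add_even: "sigma1 (y + 2 * of_int j) = sigma1 y"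
  using sigma1_eq_abs[of "y + 2 * of_int j" "\<lfloor>(y + 1) / 2\<rfloor> + j"] sigma1_def_abs_le_one[of y]
  by (simp add: sigma1_def)

lemma act_eq_self: "0 \<le> x \<Longrightarrow> x \<le> 1 \<Longrightarrow> act x = x"
  using sigma1_eq_abs[of x 0] by (simp add: act_def)

lemma act_nonneg: "0 \<le> x \<Longrightarrow> act x = sigma1 x"
  by (simp add: act_def)

lemma act_neg: "0 < y \<Longrightarrow> act (- y) = 1 / (y + 1) - 1"
  by (simp add: act_def sigma2_def field_simps)

lemma act_add_two: "\<bar>z\<bar> \<le> 1 \<Longrightarrow> act (z + 2) = \<bar>z\<bar>"
  using sigma1_eq_abs[of "z + 2" 1] by (auto simp: act_def abs_le_iff)

definition staircase :: "real \<Rightarrow> real" where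
  "staircase y = y - sigma1 y"

lemma staircase_nonneg: "0 \<le> y \<Longrightarrow> 0 \<le> staircase y"
  using sigma1_le_abs[of y 0] sigma1_le_one[of y] by (auto simp: staircase_def)

lemma staircase_le: "staircase y \<le> y"
  using sigma1_nonneg[of y] by (simp add: staircase_def)

lemma staircase_step: "0 \<le> r \<Longrightarrow> r \<le> 1 \<Longrightarrow> staircase (2 * real m + r) = 2 * real m"
  using sigma1_eq_abs[of "2 * real m + r" "int m"] by (simp add: staircase_def)

lemma staircase_staircase:
  assumes "0 \<le> r" "r \<le> 3/2"
  shows "staircase (staircase (2 * real m + r)) = 2 * real m"
proof (cases "r \<le> 1")
  case True
  then show ?thesis using staircase_step[of r m] staircase_step[of 0 m] assms by simp
next
  case False
  have "staircase (2 * real m + r) = 2 * real m + (2 * r - 2)"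
    using sigma1_eq_abs[of "2 * real m + r" "int m + 1"] False assms
    by (auto simp: staircase_def abs_le_iff)
  then show ?thesis using staircase_step[of "2 * r - 2" m] False assms by simp
qed

section \<open>Rationally independent reciprocals\<close>

definition shift_numerator :: "nat \<Rightarrow> (nat \<Rightarrow> int) \<Rightarrow> real poly" where
  "shift_numerator n k = (\<Sum>i<n. smult (of_int (k i)) (\<Prod>j\<in>{..<n} - {i}. [:real j, 1:]))"

lemma poly_shift_numerator:
  assumes "0 < c"
  shows "poly (shift_numerator n k) c = (\<Prod>j<n. real j + c) * (\<Sum>i<n. of_int (k i) / (real i + c))"
proof -
  have "of_int (k i) * (\<Prod>j\<in>{..<n} - {i}. real j + c) =
      (\<Prod>j<n. real j + c) * (of_int (k i) / (real i + c))" if "i < n" for i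
  proof -
    have "(\<Prod>j<n. real j + c) = (real i + c) * (\<Prod>j\<in>{..<n} - {i}. real j + c)"
      using that by (simp add: prod.remove)
    then show ?thesis using assms by (simp add: field_simps)
  qed
  then have "(\<Sum>i<n. of_int (k i) * (\<Prod>j\<in>{..<n} - {i}. real j + c)) =
      (\<Sum>i<n. (\<Prod>j<n. real j + c) * (of_int (k i) / (real i + c)))"
    by (intro sum.cong) auto
  then show ?thesis
    by (simp add: shift_numerator_def poly_sum poly_prod add.commute sum_distrib_left)
qed

lemma shift_numerator_nonzero:
  assumes "i0 < n" "k i0 \<noteq> 0"
  shows "shift_numerator n k \<noteq> 0"
proof
  assume "shift_numerator n k = 0"
  have vanish: "(\<Sum>i\<in>{..<n} - {i0}. of_int (k i) * (\<Prod>j\<in>{..<n} - {i}. real j - real i0)) = 0"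
    using assms(1) by (intro sum.neutral) auto
  have "poly (shift_numerator n k) (- real i0) =
      (\<Sum>i<n. of_int (k i) * (\<Prod>j\<in>{..<n} - {i}. real j - real i0))"
    by (simp add: shift_numerator_def poly_sum poly_prod)
  also have "\<dots> = of_int (k i0) * (\<Prod>j\<in>{..<n} - {i0}. real j - real i0)"
    using assms(1) vanish by (simp add: sum.remove)
  finally have "of_int (k i0) * (\<Prod>j\<in>{..<n} - {i0}. real j - real i0) = 0"
    using \<open>shift_numerator n k = 0\<close> by simp
  then show False using assms(2) by simp
qed

lemma shift_numerator_restrict: "shift_numerator n k = shift_numerator n ((!) (map k [0..<n]))"
  unfolding shift_numerator_def by (intro sum.cong) auto

lemma exists_shifted_reciprocals_independent:
  "\<exists>c>1. \<forall>k. (\<Sum>i<n. of_int (k i) / (real i + c)) = 0 \<longrightarrow> (\<forall>i<n. k i = 0)"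
proof -
  define Bad where "Bad = (\<Union>p \<in> range (shift_numerator n) - {0}. {c. poly p c = 0})"
  have "range (shift_numerator n) \<subseteq> range (\<lambda>ks. shift_numerator n ((!) ks))"
    using shift_numerator_restrict by blast
  then have "countable (range (shift_numerator n))"
    by (rule countable_subset) simp
  then have "countable Bad"
    unfolding Bad_def by (intro countable_UN countable_Diff) (auto intro: countable_finite poly_roots_finite)
  then have "uncountable ({1<..<2::real} - Bad)"
    by (intro uncountable_minus_countable) (simp add: uncountable_open_interval)
  then obtain c where c: "c \<in> {1<..<2} - Bad"
    by (metis uncountable_infinite ex_in_conv finite.emptyI)
  have "k i = 0" if "(\<Sum>i<n. of_int (k i) / (real i + c)) = 0" "i < n" for k i
  proof (rule ccontr)
    assume "k i \<noteq> 0"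
    with \<open>i < n\<close> have "shift_numerator n k \<noteq> 0" by (rule shift_numerator_nonzero)
    moreover have "poly (shift_numerator n k) c = 0"
      using poly_shift_numerator[of c n k] that(1) c by simp
    ultimately show False using c by (auto simp: Bad_def)
  qed
  then show ?thesis using c by auto
qed

lemma int_independentI:
  fixes \<theta> :: "nat \<Rightarrow> real"
  assumes "inj_on \<theta> {..<n}"
    and "\<And>k. (\<Sum>i<n. of_int (k i) * \<theta> i) = 0 \<Longrightarrow> \<forall>i<n. k i = 0"
  shows "module.independent (\<lambda>r. (*) (real_of_int r)) (\<theta> ` {..<n})"
proof -
  interpret Modules.module "\<lambda>r. (*) (real_of_int r)"
    by (simp add: Modules.module.intro distrib_left mult.commute)
  show ?thesis
  proof
    assume "dependent (\<theta> ` {..<n})"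
    then obtain u where u: "\<exists>v\<in>\<theta> ` {..<n}. u v \<noteq> 0"
      and "(\<Sum>v\<in>\<theta> ` {..<n}. of_int (u v) * v) = 0"
      by (auto simp: dependent_finite)
    then have "(\<Sum>i<n. of_int (u (\<theta> i)) * \<theta> i) = 0"
      by (simp add: sum.reindex[OF assms(1)])
    then show False using assms(2)[of "u \<circ> \<theta>"] u by auto
  qed
qed

lemma sigma1_simultaneous_approx:
  assumes "1 < c"
    and indep: "\<And>k. (\<Sum>i<n. of_int (k i) / (real i + c)) = 0 \<Longrightarrow> \<forall>i<n. k i = 0"
    and z: "\<And>m. m < n \<Longrightarrow> z m \<in> {0..1}" and "e > 0"
  obtains s where "s \<ge> 0" "\<And>m. m < n \<Longrightarrow> \<bar>sigma1 (s / (real m + c)) - z m\<bar> < e"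
proof -
  define \<theta> where "\<theta> i = 1 / (real i + c)" for i
  have "inj_on \<theta> {..<n}"
    using assms(1) by (auto simp: inj_on_def \<theta>_def field_simps)
  moreover have "module.independent (\<lambda>r. (*) (real_of_int r)) (\<theta> ` {..<n})"
    using indep by (intro int_independentI[OF \<open>inj_on \<theta> {..<n}\<close>]) (simp add: \<theta>_def)
  \<comment> \<open>The period of sigma1 is 2, hence the targets z / 2; evenness of sigma1 allows s = 2 \<bar>t\<bar>.\<close>
  ultimately obtain t h where th: "\<And>i. i < n \<Longrightarrow> \<bar>t * \<theta> i - of_int (h i) - z i / 2\<bar> < e / 2"
    using Kronecker_thm_1[of \<theta> n "e / 2" "\<lambda>i. z i / 2"] \<open>e > 0\<close> by auto
  have "\<bar>sigma1 (2 * \<bar>t\<bar> / (real m + c)) - z m\<bar> < e" if "m < n" for m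
  proof -
    have "sigma1 (2 * \<bar>t\<bar> / (real m + c)) = sigma1 (2 * t * \<theta> m)"
      using sigma1_minus[of "2 * t * \<theta> m"] by (cases "t \<ge> 0") (simp_all add: \<theta>_def)
    also have "\<dots> = sigma1 ((2 * t * \<theta> m - 2 * of_int (h m)) + 2 * of_int (h m))"
      by simp
    also have "\<dots> = sigma1 (2 * t * \<theta> m - 2 * of_int (h m))"
      by (rule sigma1_add_even)
    finally have "\<bar>sigma1 (2 * \<bar>t\<bar> / (real m + c)) - sigma1 (z m)\<bar> \<le>
        \<bar>2 * t * \<theta> m - 2 * of_int (h m) - z m\<bar>"
      using sigma1_lipschitz by simp
    also have "\<dots> = \<bar>2 * (t * \<theta> m - of_int (h m) - z m / 2)\<bar>"
      by (simp add: algebra_simps)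
    also have "\<dots> = 2 * \<bar>t * \<theta> m - of_int (h m) - z m / 2\<bar>"
      by (simp only: abs_mult)
    also have "\<dots> < e"
      using th[OF that] by simp
    finally show ?thesis
      using sigma1_eq_abs[of "z m" 0] z[OF that] by simp
  qed
  then show ?thesis by (intro that[of "2 * \<bar>t\<bar>"]) auto
qed

section \<open>A five-layer network\<close>

type_synonym layer = "nat \<times> (nat \<Rightarrow> nat \<Rightarrow> real) \<times> (nat \<Rightarrow> real)"

fun layer_maps :: "nat \<Rightarrow> layer \<Rightarrow> (nat \<Rightarrow> real) \<Rightarrow> (nat \<Rightarrow> real) \<Rightarrow> bool" where
  "layer_maps m (N, W, c) v v' \<longleftrightarrow> (\<forall>i<N. act (affine_apply m W c v i) = v' i)"

lemma layer_mapsI: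
  assumes "\<And>i. i < N \<Longrightarrow> affine_apply m W c v i = z i" "\<And>i. i < N \<Longrightarrow> act (z i) = v' i"
  shows "layer_maps m (N, W, c) v v'"
  using assms by simp

lemma hidden_eval_cong:
  assumes "\<forall>j<m. v j = v' j"
  shows "fst (hidden_eval m Ls v) = fst (hidden_eval m Ls v') \<and>
    (\<forall>j<fst (hidden_eval m Ls v). snd (hidden_eval m Ls v) j = snd (hidden_eval m Ls v') j)"
  using assms
proof (induction Ls arbitrary: m v v')
  case Nil
  then show ?case by simp
next
  case (Cons L Ls)
  obtain N W c where L: "L = (N, W, c)" by (cases L) auto
  have "\<forall>i<N. act (affine_apply m W c v i) = act (affine_apply m W c v' i)"
    using Cons.prems by (simp add: affine_apply_def)
  from Cons.IH[OF this] show ?case by (simp add: L)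
qed

lemma net_eval_layer:
  assumes "layer_maps m L v v'"
  shows "net_eval m (L # Ls) w b v = net_eval (fst L) Ls w b v'"
proof -
  obtain N W c where L: "L = (N, W, c)" by (cases L) auto
  show ?thesis
    using assms hidden_eval_cong[of N "\<lambda>i. act (affine_apply m W c v i)" v' Ls]
    by (auto simp: L net_eval_def case_prod_beta intro!: sum.cong)
qed

lemma generated_by_net_affine_output:
  assumes "generated_by_net n N L phi"
  shows "generated_by_net n N L (\<lambda>v. \<alpha> * phi v + \<beta>)"
proof -
  obtain Ls w b where Ls: "length Ls \<le> L" "\<forall>l\<in>set Ls. 1 \<le> fst l \<and> fst l \<le> N"
    and phi: "\<And>v. phi v = net_eval n Ls w b (\<lambda>j. if j < n then v j else 0)"
    using assms unfolding generated_by_net_def by blast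
  have "\<alpha> * phi v + \<beta> = net_eval n Ls (\<lambda>j. \<alpha> * w j) (\<alpha> * b + \<beta>) (\<lambda>j. if j < n then v j else 0)"
    for v
    by (simp add: phi net_eval_def case_prod_beta sum_distrib_left distrib_left mult.assoc)
  with Ls show ?thesis unfolding generated_by_net_def by blast
qed

definition list_vec :: "real list \<Rightarrow> nat \<Rightarrow> real" where
  "list_vec xs i = xs ! i"

definition list_mat :: "real list list \<Rightarrow> nat \<Rightarrow> nat \<Rightarrow> real" where
  "list_mat xss i j = xss ! i ! j"

lemmas layer_simps = affine_apply_def list_vec_def list_mat_def numeral_eq_Suc less_Suc_eq

definition rescale_layer :: "real \<Rightarrow> real \<Rightarrow> real \<Rightarrow> layer" where
  "rescale_layer k l U = (4, list_mat [[k / U], [k], [k], [k]], list_vec [l / U, l, l + 1, l + 5/4])"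

lemma layer_maps_rescale_layer:
  assumes "u = k * v 0 + l" "0 \<le> u" "u \<le> U"
  shows "layer_maps 1 (rescale_layer k l U) v
    (list_vec [u / U, sigma1 u, sigma1 (u + 1), sigma1 (u + 5/4)])"
  unfolding rescale_layer_def
proof (rule layer_mapsI[where z = "list_vec [u / U, u, u + 1, u + 5/4]"])
  show "affine_apply 1 (list_mat [[k / U], [k], [k], [k]]) (list_vec [l / U, l, l + 1, l + 5/4]) v i =
      list_vec [u / U, u, u + 1, u + 5/4] i" if "i < 4" for i
    using that assms(1) by (auto simp: layer_simps add_divide_distrib)
  have "act (u / U) = u / U"
    using assms(2,3) by (intro act_eq_self) (auto simp: divide_le_eq)
  then show "act (list_vec [u / U, u, u + 1, u + 5/4] i) =
      list_vec [u / U, sigma1 u, sigma1 (u + 1), sigma1 (u + 5/4)] i" if "i < 4" for i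
    using that assms(2) by (auto simp: layer_simps act_nonneg)
qed

definition staircase_layer :: "real \<Rightarrow> layer" where
  "staircase_layer U = (7,
    list_mat [[U / (U + 1), - 1 / (U + 1), 0, 0], [U, - 1, 0, 0], [U / (U + 1), 0, - 1 / (U + 1), 0],
      [U, 0, - 1, 0], [0, 0, 0, 1], [0, 0, 0, 1], [0, 0, 0, - 1]],
    list_vec [0, 0, 1 / (U + 1), 1, 0, 11/8, 19/8])"

lemma layer_maps_staircase_layer:
  assumes "0 \<le> u" "u \<le> U" "0 < U" "0 \<le> d" "d \<le> 1"
  defines "g1 \<equiv> staircase u" and "g2 \<equiv> staircase (u + 1)"
  shows "layer_maps 4 (staircase_layer U) (list_vec [u / U, sigma1 u, sigma1 (u + 1), d])
    (list_vec [g1 / (U + 1), sigma1 g1, g2 / (U + 1), sigma1 g2, d, \<bar>d - 5/8\<bar>, \<bar>3/8 - d\<bar>])"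
  unfolding staircase_layer_def
proof (rule layer_mapsI[where z = "list_vec [g1 / (U + 1), g1, g2 / (U + 1), g2, d, d - 5/8 + 2, 3/8 - d + 2]"])
  fix i :: nat assume "i < 7"
  then show "affine_apply 4 (list_mat [[U / (U + 1), - 1 / (U + 1), 0, 0], [U, - 1, 0, 0],
      [U / (U + 1), 0, - 1 / (U + 1), 0], [U, 0, - 1, 0], [0, 0, 0, 1], [0, 0, 0, 1], [0, 0, 0, - 1]])
      (list_vec [0, 0, 1 / (U + 1), 1, 0, 11/8, 19/8]) (list_vec [u / U, sigma1 u, sigma1 (u + 1), d]) i =
      list_vec [g1 / (U + 1), g1, g2 / (U + 1), g2, d, d - 5/8 + 2, 3/8 - d + 2] i"
    using assms(3) by (auto simp: layer_simps g1_def g2_def staircase_def diff_divide_distrib add_divide_distrib)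
  have g1: "0 \<le> g1" "g1 \<le> U" and g2: "0 \<le> g2" "g2 \<le> U + 1"
    using assms(1,2) staircase_nonneg staircase_le unfolding g1_def g2_def
    by (meson add_nonneg_nonneg add_right_mono order_trans zero_le_one)+
  have "act (g1 / (U + 1)) = g1 / (U + 1)" "act (g2 / (U + 1)) = g2 / (U + 1)"
    "act g1 = sigma1 g1" "act g2 = sigma1 g2" "act d = d"
    using g1 g2 assms(3-5) by (auto intro!: act_eq_self act_nonneg simp: divide_le_eq)
  moreover have "act (d - 5/8 + 2) = \<bar>d - 5/8\<bar>" "act (3/8 - d + 2) = \<bar>3/8 - d\<bar>"
    using act_add_two[of "d - 5/8"] act_add_two[of "3/8 - d"] assms(4,5) by (auto simp: abs_le_iff)
  ultimately show "act (list_vec [g1 / (U + 1), g1, g2 / (U + 1), g2, d, d - 5/8 + 2, 3/8 - d + 2] i) =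
      list_vec [g1 / (U + 1), sigma1 g1, g2 / (U + 1), sigma1 g2, d, \<bar>d - 5/8\<bar>, \<bar>3/8 - d\<bar>] i"
    using \<open>i < 7\<close> by (auto simp: layer_simps)
qed

definition reciprocal_layer :: "real \<Rightarrow> real \<Rightarrow> layer" where
  "reciprocal_layer U c = (4,
    list_mat [[- (U + 1) / 2, 1/2, 0, 0, 0, 0, 0], [0, 0, - (U + 1) / 2, 1/2, 0, 0, 0],
      [0, 0, 0, 0, 4/3, 4/3, 0], [0, 0, 0, 0, - 4/3, 0, 4/3]],
    list_vec [1 - c, 1 - c, - 5/6, 1/2])"

lemma layer_maps_reciprocal_layer:
  assumes "0 \<le> g1" "0 \<le> g2" "0 < U" "1 < c" "0 \<le> d" "d \<le> 1"
  defines "q1 \<equiv> staircase g1 / 2 + c" and "q2 \<equiv> staircase g2 / 2 + c"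
  shows "layer_maps 7 (reciprocal_layer U c)
    (list_vec [g1 / (U + 1), sigma1 g1, g2 / (U + 1), sigma1 g2, d, \<bar>d - 5/8\<bar>, \<bar>3/8 - d\<bar>])
    (list_vec [1 / q1 - 1, 1 / q2 - 1, 8/3 * max (d - 5/8) 0, 8/3 * max (3/8 - d) 0])"
  unfolding reciprocal_layer_def
proof (rule layer_mapsI[where z = "list_vec [- (q1 - 1), - (q2 - 1), 8/3 * max (d - 5/8) 0, 8/3 * max (3/8 - d) 0]"])
  fix i :: nat assume "i < 4"
  have "- (U + 1) / 2 * (g / (U + 1)) + 1/2 * sigma1 g + (1 - c) = - (staircase g / 2 + c - 1)" for g
    using assms(3) by (simp add: staircase_def field_simps)
  moreover have "4/3 * d + 4/3 * \<bar>d - 5/8\<bar> - 5/6 = 8/3 * max (d - 5/8) 0"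
    "- 4/3 * d + 4/3 * \<bar>3/8 - d\<bar> + 1/2 = 8/3 * max (3/8 - d) 0"
    by (auto simp: max_def abs_if)
  ultimately show "affine_apply 7 (list_mat [[- (U + 1) / 2, 1/2, 0, 0, 0, 0, 0], [0, 0, - (U + 1) / 2, 1/2, 0, 0, 0],
      [0, 0, 0, 0, 4/3, 4/3, 0], [0, 0, 0, 0, - 4/3, 0, 4/3]]) (list_vec [1 - c, 1 - c, - 5/6, 1/2])
      (list_vec [g1 / (U + 1), sigma1 g1, g2 / (U + 1), sigma1 g2, d, \<bar>d - 5/8\<bar>, \<bar>3/8 - d\<bar>]) i =
      list_vec [- (q1 - 1), - (q2 - 1), 8/3 * max (d - 5/8) 0, 8/3 * max (3/8 - d) 0] i"
    using \<open>i < 4\<close> by (auto simp: layer_simps q1_def q2_def)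
  have "0 < q1 - 1" "0 < q2 - 1"
    using staircase_nonneg[OF assms(1)] staircase_nonneg[OF assms(2)] assms(4)
    unfolding q1_def q2_def by linarith+
  then have "act (- (q1 - 1)) = 1 / q1 - 1" "act (- (q2 - 1)) = 1 / q2 - 1"
    using act_neg[of "q1 - 1"] act_neg[of "q2 - 1"] by simp_all
  moreover have "act (8/3 * max (d - 5/8) 0) = 8/3 * max (d - 5/8) 0"
    "act (8/3 * max (3/8 - d) 0) = 8/3 * max (3/8 - d) 0"
    using assms(5,6) by (intro act_eq_self; simp add: max_def)+
  ultimately show "act (list_vec [- (q1 - 1), - (q2 - 1), 8/3 * max (d - 5/8) 0, 8/3 * max (3/8 - d) 0] i) =
      list_vec [1 / q1 - 1, 1 / q2 - 1, 8/3 * max (d - 5/8) 0, 8/3 * max (3/8 - d) 0] i"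
    using \<open>i < 4\<close> by (auto simp: layer_simps)
qed

definition wave_layer :: "real \<Rightarrow> real \<Rightarrow> layer" where
  "wave_layer s1 s2 = (4, list_mat [[s1, 0, 0, 0], [0, s2, 0, 0], [0, 0, 1, 0], [0, 0, 0, 1]],
    list_vec [s1, s2, 0, 0])"

lemma layer_maps_wave_layer:
  assumes "0 < q1" "0 < q2" "0 \<le> s1" "0 \<le> s2" "0 \<le> r1" "r1 \<le> 1" "0 \<le> r2" "r2 \<le> 1"
  shows "layer_maps 4 (wave_layer s1 s2) (list_vec [1 / q1 - 1, 1 / q2 - 1, r1, r2])
    (list_vec [sigma1 (s1 / q1), sigma1 (s2 / q2), r1, r2])"
  unfolding wave_layer_def
proof (rule layer_mapsI[where z = "list_vec [s1 / q1, s2 / q2, r1, r2]"])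
  fix i :: nat assume "i < 4"
  then show "affine_apply 4 (list_mat [[s1, 0, 0, 0], [0, s2, 0, 0], [0, 0, 1, 0], [0, 0, 0, 1]])
      (list_vec [s1, s2, 0, 0]) (list_vec [1 / q1 - 1, 1 / q2 - 1, r1, r2]) i =
      list_vec [s1 / q1, s2 / q2, r1, r2] i"
    by (auto simp: layer_simps right_diff_distrib)
  have "act (s1 / q1) = sigma1 (s1 / q1)" "act (s2 / q2) = sigma1 (s2 / q2)" "act r1 = r1" "act r2 = r2"
    using assms by (auto intro!: act_nonneg act_eq_self)
  then show "act (list_vec [s1 / q1, s2 / q2, r1, r2] i) =
      list_vec [sigma1 (s1 / q1), sigma1 (s2 / q2), r1, r2] i"
    using \<open>i < 4\<close> by (auto simp: layer_simps)
qed

definition max_layer :: layer where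
  "max_layer = (2, list_mat [[1/4, - 1/4, - 3/4, 3/4], [1/8, 1/8, - 3/8, - 3/8]], list_vec [2, 3/4])"

lemma layer_maps_max_layer:
  assumes "0 \<le> A" "A \<le> 1" "0 \<le> B" "B \<le> 1" "0 \<le> r1" "r1 \<le> 1" "0 \<le> r2" "r2 \<le> 1"
  defines "X \<equiv> A - 3 * r1" and "Y \<equiv> B - 3 * r2"
  shows "layer_maps 4 max_layer (list_vec [A, B, r1, r2]) (list_vec [\<bar>X - Y\<bar> / 4, (X + Y + 6) / 8])"
  unfolding max_layer_def
proof (rule layer_mapsI[where z = "list_vec [(X - Y) / 4 + 2, (X + Y + 6) / 8]"])
  fix i :: nat assume "i < 2"
  then show "affine_apply 4 (list_mat [[1/4, - 1/4, - 3/4, 3/4], [1/8, 1/8, - 3/8, - 3/8]])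
      (list_vec [2, 3/4]) (list_vec [A, B, r1, r2]) i = list_vec [(X - Y) / 4 + 2, (X + Y + 6) / 8] i"
    by (auto simp: layer_simps X_def Y_def)
  have "act ((X - Y) / 4 + 2) = \<bar>X - Y\<bar> / 4"
    using act_add_two[of "(X - Y) / 4"] assms by (simp add: X_def Y_def abs_le_iff)
  moreover have "act ((X + Y + 6) / 8) = (X + Y + 6) / 8"
    using assms by (intro act_eq_self) (simp_all add: X_def Y_def)
  ultimately show "act (list_vec [(X - Y) / 4 + 2, (X + Y + 6) / 8] i) =
      list_vec [\<bar>X - Y\<bar> / 4, (X + Y + 6) / 8] i"
    using \<open>i < 2\<close> by (auto simp: layer_simps)
qed

lemma net_eval_max_output: "net_eval 2 [] (list_vec [2, 4]) (- 3) (list_vec [\<bar>X - Y\<bar> / 4, (X + Y + 6) / 8]) = max X Y"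
  by (simp add: net_eval_def list_vec_def numeral_eq_Suc max_def abs_if field_simps)

definition plateau_wave :: "real \<Rightarrow> real \<Rightarrow> real \<Rightarrow> real" where
  "plateau_wave c s y = sigma1 (s / (staircase (staircase y) / 2 + c))"

text \<open>The phase d = sigma1 (u + 5/4) is at most 1/4 where the second copy is off its plateau and
  at least 3/4 where the first one is. The first copy is penalised only for d > 5/8, the second
  only for d < 3/8, and by at least 1 off its plateau.\<close>

definition switch_value :: "real \<Rightarrow> real \<Rightarrow> real \<Rightarrow> real \<Rightarrow> real" where
  "switch_value c s1 s2 u = (let d = sigma1 (u + 5/4) in
     max (plateau_wave c s1 u - 8 * max (d - 5/8) 0) (plateau_wave c s2 (u + 1) - 8 * max (3/8 - d) 0))"

definition switch_net :: "real \<Rightarrow> real \<Rightarrow> real \<Rightarrow> real \<Rightarrow> real \<Rightarrow> real \<Rightarrow> (nat \<Rightarrow> real) \<Rightarrow> real" where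
  "switch_net k l U c s1 s2 v = net_eval 1
     [rescale_layer k l U, staircase_layer U, reciprocal_layer U c, wave_layer s1 s2, max_layer]
     (list_vec [2, 4]) (- 3) (\<lambda>j. if j < 1 then v j else 0)"

lemma layer_widths [simp]:
  "fst (rescale_layer k l U) = 4" "fst (staircase_layer U) = 7" "fst (reciprocal_layer U c) = 4"
  "fst (wave_layer s1 s2) = 4" "fst max_layer = 2"
  by (simp_all add: rescale_layer_def staircase_layer_def reciprocal_layer_def wave_layer_def max_layer_def)

lemma generated_by_net_switch_net: "generated_by_net 1 36 5 (switch_net k l U c s1 s2)"
  unfolding generated_by_net_def switch_net_def by (intro exI conjI allI) auto

lemma switch_net_eq:
  assumes "0 < U" "1 < c" "0 \<le> s1" "0 \<le> s2" "0 \<le> k * x + l" "k * x + l \<le> U"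
  shows "switch_net k l U c s1 s2 (\<lambda>_. x) = switch_value c s1 s2 (k * x + l)"
proof -
  define u where "u = k * x + l"
  define d where "d = sigma1 (u + 5/4)"
  define g1 where "g1 = staircase u"
  define g2 where "g2 = staircase (u + 1)"
  define q1 where "q1 = staircase g1 / 2 + c"
  define q2 where "q2 = staircase g2 / 2 + c"
  define r1 where "r1 = 8/3 * max (d - 5/8) 0"
  define r2 where "r2 = 8/3 * max (3/8 - d) 0"
  define X where "X = sigma1 (s1 / q1) - 3 * r1"
  define Y where "Y = sigma1 (s2 / q2) - 3 * r2"
  have u: "0 \<le> u" "u \<le> U" using assms(5,6) by (simp_all add: u_def)
  have d: "0 \<le> d" "d \<le> 1" by (simp_all add: d_def sigma1_nonneg sigma1_le_one)
  have g: "0 \<le> g1" "0 \<le> g2" using u by (simp_all add: g1_def g2_def staircase_nonneg)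
  have q: "0 < q1" "0 < q2"
    using staircase_nonneg[OF g(1)] staircase_nonneg[OF g(2)] assms(2) by (simp_all add: q1_def q2_def)
  have r: "0 \<le> r1" "r1 \<le> 1" "0 \<le> r2" "r2 \<le> 1" using d by (simp_all add: r1_def r2_def max_def)
  let ?w = "list_vec [2, 4]"
  have "switch_net k l U c s1 s2 (\<lambda>_. x) = net_eval 1
     [rescale_layer k l U, staircase_layer U, reciprocal_layer U c, wave_layer s1 s2, max_layer]
     ?w (- 3) (\<lambda>j. if j < 1 then x else 0)"
    by (simp add: switch_net_def)
  also have "\<dots> = net_eval 4 [staircase_layer U, reciprocal_layer U c, wave_layer s1 s2, max_layer]
     ?w (- 3) (list_vec [u / U, sigma1 u, sigma1 (u + 1), d])"
    using layer_maps_rescale_layer[of u k "\<lambda>j. if j < 1 then x else 0" l U] u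
    by (simp add: net_eval_layer u_def d_def)
  also have "\<dots> = net_eval 7 [reciprocal_layer U c, wave_layer s1 s2, max_layer] ?w (- 3)
     (list_vec [g1 / (U + 1), sigma1 g1, g2 / (U + 1), sigma1 g2, d, \<bar>d - 5/8\<bar>, \<bar>3/8 - d\<bar>])"
    using layer_maps_staircase_layer[OF u assms(1) d] by (simp add: net_eval_layer g1_def g2_def)
  also have "\<dots> = net_eval 4 [wave_layer s1 s2, max_layer] ?w (- 3) (list_vec [1 / q1 - 1, 1 / q2 - 1, r1, r2])"
    using layer_maps_reciprocal_layer[OF g assms(1,2) d] by (simp add: net_eval_layer q1_def q2_def r1_def r2_def)
  also have "\<dots> = net_eval 4 [max_layer] ?w (- 3) (list_vec [sigma1 (s1 / q1), sigma1 (s2 / q2), r1, r2])"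
    using layer_maps_wave_layer[OF q assms(3,4) r] by (simp add: net_eval_layer)
  also have "\<dots> = net_eval 2 [] ?w (- 3) (list_vec [\<bar>X - Y\<bar> / 4, (X + Y + 6) / 8])"
    using layer_maps_max_layer[of "sigma1 (s1 / q1)" "sigma1 (s2 / q2)" r1 r2] r
    by (simp add: net_eval_layer X_def Y_def sigma1_nonneg sigma1_le_one)
  also have "\<dots> = max X Y"
    by (rule net_eval_max_output)
  also have "\<dots> = switch_value c s1 s2 u"
    by (simp add: switch_value_def Let_def plateau_wave_def X_def Y_def q1_def q2_def r1_def r2_def g1_def g2_def d_def)
  finally show ?thesis by (simp add: u_def)
qed

section \<open>Approximation\<close>

lemma plateau_wave_eq:
  "0 \<le> r \<Longrightarrow> r \<le> 3/2 \<Longrightarrow> plateau_wave c s (2 * real m + r) = sigma1 (s / (real m + c))"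
  by (simp add: plateau_wave_def staircase_staircase)

lemma sigma1_phase_low: "1/2 \<le> r \<Longrightarrow> r \<le> 1 \<Longrightarrow> sigma1 (r + 5/4) \<le> 1/4"
  using sigma1_eq_abs[of "r + 5/4" 1] by (simp add: abs_if)

lemma sigma1_phase_high: "3/2 \<le> r \<Longrightarrow> r \<le> 2 \<Longrightarrow> 3/4 \<le> sigma1 (r + 5/4)"
  using sigma1_eq_abs[of "r + 5/4" 1] sigma1_eq_abs[of "r + 5/4" 2]
  by (cases "r \<le> 7/4") (simp_all add: abs_le_iff)

lemma switch_value_approx:
  fixes p :: "real \<Rightarrow> real"
  assumes u: "0 \<le> u" "u \<le> 2 * real N" and "0 \<le> y"
    and p: "\<And>t. \<bar>u - t\<bar> \<le> 3/2 \<Longrightarrow> \<bar>p t - y\<bar> < \<eta> / 2"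
    and s1: "\<And>m. m \<le> N \<Longrightarrow> \<bar>sigma1 (s1 / (real m + c)) - p (2 * real m)\<bar> < \<eta> / 2"
    and s2: "\<And>m. m \<le> N \<Longrightarrow> \<bar>sigma1 (s2 / (real m + c)) - p (2 * real m - 1)\<bar> < \<eta> / 2"
  shows "\<bar>switch_value c s1 s2 u - y\<bar> < \<eta>"
proof -
  define m where "m = nat \<lfloor>u / 2\<rfloor>"
  define r where "r = u - 2 * real m"
  have r: "0 \<le> r" "r < 2" and u_eq: "u = 2 * real m + r"
    using u(1) by (simp_all add: r_def m_def) linarith+
  have "m \<le> N" using u(2) r(1) u_eq by simp
  define A where "A = plateau_wave c s1 u"
  define B where "B = plateau_wave c s2 (u + 1)"
  define d where "d = sigma1 (r + 5/4)"
  have "sigma1 (u + 5/4) = d"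
    using sigma1_add_even[of "r + 5/4" "int m"] by (simp add: d_def u_eq add_ac)
  then have switch_eq: "switch_value c s1 s2 u = max (A - 8 * max (d - 5/8) 0) (B - 8 * max (3/8 - d) 0)"
    by (simp add: switch_value_def A_def B_def)
  have AB: "A \<le> 1" "B \<le> 1" by (simp_all add: A_def B_def plateau_wave_def sigma1_le_one)
  have A_good: "\<bar>A - y\<bar> < \<eta>" if "r \<le> 3/2"
  proof -
    have "\<bar>A - p (2 * real m)\<bar> < \<eta> / 2"
      using s1[OF \<open>m \<le> N\<close>] plateau_wave_eq[OF r(1) that] by (simp add: A_def u_eq)
    moreover have "\<bar>p (2 * real m) - y\<bar> < \<eta> / 2"
      using p that r(1) by (simp add: u_eq)
    ultimately show ?thesis by linarith
  qed
  have B_good: "\<bar>B - y\<bar> < \<eta>" if "r \<le> 1/2 \<or> 1 \<le> r"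
  proof -
    obtain m' r' where "u + 1 = 2 * real m' + r'" "0 \<le> r'" "r' \<le> 3/2" "m' \<le> N" "\<bar>u - (2 * real m' - 1)\<bar> \<le> 3/2"
    proof (cases "r \<le> 1/2")
      case True
      then show thesis using that[of m "r + 1"] r(1) \<open>m \<le> N\<close> by (simp add: u_eq)
    next
      case False
      then have "Suc m \<le> N" using \<open>r \<le> 1/2 \<or> 1 \<le> r\<close> u(2) u_eq by simp
      then show thesis using that[of "Suc m" "r - 1"] \<open>r \<le> 1/2 \<or> 1 \<le> r\<close> False r(2)
        by (simp add: u_eq)
    qed
    then have "\<bar>B - p (2 * real m' - 1)\<bar> < \<eta> / 2" "\<bar>p (2 * real m' - 1) - y\<bar> < \<eta> / 2"
      using s2 plateau_wave_eq[of r' c s2 m'] p by (simp_all add: B_def)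
    then show ?thesis by linarith
  qed
  consider "r \<le> 1/2 \<or> (1 \<le> r \<and> r \<le> 3/2)" | "1/2 < r" "r < 1" | "3/2 < r" by linarith
  then show ?thesis
  proof cases
    case 1
    then show ?thesis using A_good B_good switch_eq by (auto simp: max_def abs_less_iff)
  next
    case 2
    then have "d \<le> 1/4" unfolding d_def by (intro sigma1_phase_low) auto
    then show ?thesis using A_good 2 AB \<open>0 \<le> y\<close> switch_eq by (auto simp: max_def abs_less_iff)
  next
    case 3
    then have "3/4 \<le> d" unfolding d_def using r(2) by (intro sigma1_phase_high) auto
    then show ?thesis using B_good 3 AB \<open>0 \<le> y\<close> switch_eq by (auto simp: max_def abs_less_iff)
  qed
qed

lemma unit_valued_approx:
  assumes "a < b" and cont: "continuous_on {a..b} g"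
    and g01: "\<And>x. x \<in> {a..b} \<Longrightarrow> g x \<in> {0..1}" and "0 < \<eta>"
  shows "\<exists>phi. generated_by_net 1 36 5 phi \<and> (\<forall>x\<in>{a..b}. \<bar>phi (\<lambda>_. x) - g x\<bar> < \<eta>)"
proof -
  have "uniformly_continuous_on {a..b} g"
    using cont by (intro compact_uniformly_continuous) auto
  then obtain \<delta> where "\<delta> > 0"
    and \<delta>: "\<And>x y. x \<in> {a..b} \<Longrightarrow> y \<in> {a..b} \<Longrightarrow> \<bar>y - x\<bar> < \<delta> \<Longrightarrow> \<bar>g y - g x\<bar> < \<eta> / 2"
    unfolding uniformly_continuous_on_def dist_real_def using \<open>0 < \<eta>\<close> by (metis half_gt_zero)
  obtain N :: nat where N: "(b - a) / \<delta> < real N"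
    using reals_Archimedean2 by blast
  then have "b - a < real N * \<delta>"
    using \<open>\<delta> > 0\<close> by (simp add: pos_divide_less_eq)
  then have "0 < real N"
    using \<open>a < b\<close> by (cases "N = 0") auto
  define U where "U = 2 * real N"
  define k where "k = U / (b - a)"
  define l where "l = - k * a"
  have "0 < U" "0 < k" using \<open>0 < real N\<close> \<open>a < b\<close> by (simp_all add: U_def k_def)
  have step: "(3/2) / k < \<delta>"
    using \<open>b - a < real N * \<delta>\<close> \<open>0 < real N\<close> \<open>a < b\<close> \<open>\<delta> > 0\<close> by (simp add: k_def U_def field_simps)
  \<comment> \<open>g on the u-scale, clamped because the second copy also reads it at u = -1\<close>
  define p where "p t = g (max a (min b ((t - l) / k)))" for t
  have p01: "p t \<in> {0..1}" for t using g01 \<open>a < b\<close> by (simp add: p_def)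
  obtain c where "1 < c" and indep: "\<And>ks. (\<Sum>i<Suc N. of_int (ks i) / (real i + c)) = 0 \<Longrightarrow> \<forall>i<Suc N. ks i = 0"
    using exists_shifted_reciprocals_independent by blast
  obtain s1 where "s1 \<ge> 0" and s1: "\<And>m. m < Suc N \<Longrightarrow> \<bar>sigma1 (s1 / (real m + c)) - p (2 * real m)\<bar> < \<eta> / 2"
    by (rule sigma1_simultaneous_approx[where z = "\<lambda>m. p (2 * real m)" and e = "\<eta> / 2", OF \<open>1 < c\<close> indep p01])
      (use \<open>0 < \<eta>\<close> in auto)
  obtain s2 where "s2 \<ge> 0" and s2: "\<And>m. m < Suc N \<Longrightarrow> \<bar>sigma1 (s2 / (real m + c)) - p (2 * real m - 1)\<bar> < \<eta> / 2"
    by (rule sigma1_simultaneous_approx[where z = "\<lambda>m. p (2 * real m - 1)" and e = "\<eta> / 2", OF \<open>1 < c\<close> indep p01])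
      (use \<open>0 < \<eta>\<close> in auto)
  have "\<bar>switch_net k l U c s1 s2 (\<lambda>_. x) - g x\<bar> < \<eta>" if x: "x \<in> {a..b}" for x
  proof -
    have "k * x + l = k * (x - a)" by (simp add: l_def algebra_simps)
    moreover have "0 \<le> k * (x - a)" "k * (x - a) \<le> k * (b - a)" using x \<open>0 < k\<close> by simp_all
    moreover have "k * (b - a) = U" using \<open>a < b\<close> by (simp add: k_def)
    ultimately have u: "0 \<le> k * x + l" "k * x + l \<le> U" by simp_all
    have close: "\<bar>p t - g x\<bar> < \<eta> / 2" if "\<bar>k * x + l - t\<bar> \<le> 3/2" for t
    proof -
      have "\<bar>max a (min b ((t - l) / k)) - x\<bar> \<le> \<bar>(t - l) / k - x\<bar>"
        using x by (auto simp: max_def min_def)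
      also have "\<dots> = \<bar>k * x + l - t\<bar> / k"
        using \<open>0 < k\<close> by (simp add: field_simps abs_minus_commute)
      also have "\<dots> \<le> (3/2) / k"
        using that \<open>0 < k\<close> by (intro divide_right_mono) simp_all
      finally show ?thesis
        using \<delta>[OF x, of "max a (min b ((t - l) / k))"] step \<open>a < b\<close> by (simp add: p_def)
    qed
    have "\<bar>switch_value c s1 s2 (k * x + l) - g x\<bar> < \<eta>"
      by (rule switch_value_approx[where N = N and p = p])
        (use u close s1 s2 g01[OF x] in \<open>simp_all add: U_def\<close>)
    then show ?thesis
      using switch_net_eq[OF \<open>0 < U\<close> \<open>1 < c\<close> \<open>s1 \<ge> 0\<close> \<open>s2 \<ge> 0\<close> u] by simp
  qed
  then show ?thesis using generated_by_net_switch_net by blast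
qed

theorem theorem6:
  fixes a b :: real and f :: "real \<Rightarrow> real"
  assumes "a < b" and "continuous_on {a..b} f"
  shows "\<forall>\<epsilon>>0. \<exists>phi. generated_by_net 1 36 5 phi \<and>
           (\<forall>x\<in>{a..b}. \<bar>phi (\<lambda>_. x) - f x\<bar> < \<epsilon>)"
proof (intro allI impI)
  fix \<epsilon> :: real assume "\<epsilon> > 0"
  obtain B where B: "\<And>x. x \<in> {a..b} \<Longrightarrow> \<bar>f x\<bar> \<le> B"
    using compact_imp_bounded[OF compact_continuous_image[OF assms(2) compact_Icc]]
    by (metis bounded_iff imageI real_norm_def)
  define \<alpha> where "\<alpha> = 2 * (\<bar>B\<bar> + 1)"
  define g where "g x = (f x + \<alpha> / 2) / \<alpha>" for x
  have "0 < \<alpha>" by (simp add: \<alpha>_def add_pos_nonneg)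
  have "continuous_on {a..b} g"
    unfolding g_def by (intro continuous_intros assms(2)) (use \<open>0 < \<alpha>\<close> in simp)
  moreover have "g x \<in> {0..1}" if "x \<in> {a..b}" for x
    using B[OF that] \<open>0 < \<alpha>\<close> by (auto simp: g_def \<alpha>_def field_simps abs_le_iff)
  ultimately obtain phi where phi: "generated_by_net 1 36 5 phi"
    and approx: "\<forall>x\<in>{a..b}. \<bar>phi (\<lambda>_. x) - g x\<bar> < \<epsilon> / \<alpha>"
    using unit_valued_approx[OF \<open>a < b\<close>] \<open>\<epsilon> > 0\<close> \<open>0 < \<alpha>\<close> by (metis divide_pos_pos)
  have "\<bar>\<alpha> * phi (\<lambda>_. x) - \<alpha> / 2 - f x\<bar> < \<epsilon>" if "x \<in> {a..b}" for x
  proof -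
    have "\<bar>\<alpha> * phi (\<lambda>_. x) - \<alpha> / 2 - f x\<bar> = \<alpha> * \<bar>phi (\<lambda>_. x) - g x\<bar>"
      using \<open>0 < \<alpha>\<close> by (simp add: g_def field_simps flip: abs_mult_pos)
    then show ?thesis using approx that \<open>0 < \<alpha>\<close> by (simp add: pos_less_divide_eq mult.commute)
  qed
  then show "\<exists>phi. generated_by_net 1 36 5 phi \<and> (\<forall>x\<in>{a..b}. \<bar>phi (\<lambda>_. x) - f x\<bar> < \<epsilon>)"
    using generated_by_net_affine_output[OF phi, of \<alpha> "- \<alpha> / 2"] by auto
qed

end
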